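(* Let $n,m,k,l$ be non-negative integers with $l\le k\le n$, $l\le m$ and $k-l\le n-m$, and set $M:=m-l$, $N:=n-m-k+l$. Let $\ket{\Xi_{n,m|k,l}}:=\ket{1}^{\otimes l}\otimes\ket{0}^{\otimes(k-l)}\otimes\ket{\Xi_{N+M,M}}\in(\mathbb{C}^2)^{\otimes n}$. Then $$S\bigl(\mathrm{av}_\pi[\Xi_{n,m|k,l}]\bigr)\ \ge\ S(\rho_{mix,n,m})-S(\rho_{mix,N+M,M})=\log\binom{n}{m}-\log\binom{n-k}{m-l}.$$
   Context: The Dicke state $\ket{\Xi_{N+M,M}}$ is $\binom{N+M}{M}^{-1/2}$ times the sum of all computational basis vectors of $(\mathbb{C}^2)^{\otimes(N+M)}$ with exactly $M$ ones. For integers $0\le b\le a$, $\rho_{mix,a,b}$ is the state on $(\mathbb{C}^2)^{\otimes a}$ equal to $\binom{a}{b}^{-1}$ times the sum of the projectors $\ket{\vec x}\bra{\vec x}$ over all computational basis vectors $\vec x$ with exactly $b$ ones. $\mathfrak{S}_n$ acts by $\pi(g)\ket{i_1\cdots i_n}=\ket{i_{g^{-1}(1)}\cdots i_{g^{-1}(n)}}$, $\mathrm{av}_\pi[\rho]:=\frac{1}{n!}\sum_{g}\pi(g)\rho\,\pi(g)^\dagger$, $\Xi_{n,m|k,l}$ is the projector onto $\ket{\Xi_{n,m|k,l}}$, and $S$ is the von Neumann entropy. *)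

theory Defs
  imports "Jordan_Normal_Form.Schur_Decomposition" "HOL-Combinatorics.Permutations"
    "HOL-Computational_Algebra.Polynomial"
begin

text \<open>States on (C^2)^{tensor a} are 2^a x 2^a complex matrices. Basis index i < 2^a
  encodes the bit string i_1...i_a, qubit 1 being the most significant bit.\<close>

definition qubit :: "nat \<Rightarrow> nat \<Rightarrow> nat \<Rightarrow> nat" where
  "qubit a i j = (i div 2 ^ (a - 1 - j)) mod 2"   (* j-th qubit (0-based) of index i *)

definition index_of_bits :: "nat \<Rightarrow> (nat \<Rightarrow> nat) \<Rightarrow> nat" where
  "index_of_bits a b = (\<Sum>j<a. b j * 2 ^ (a - 1 - j))"

definition weight :: "nat \<Rightarrow> nat \<Rightarrow> nat" where
  "weight a i = card {j. j < a \<and> qubit a i j = 1}"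

definition kron_vec :: "complex vec \<Rightarrow> complex vec \<Rightarrow> complex vec" where
  "kron_vec u v = vec (dim_vec u * dim_vec v) (\<lambda>i. u $ (i div dim_vec v) * v $ (i mod dim_vec v))"

definition ket0 :: "complex vec" where "ket0 = vec 2 (\<lambda>i. if i = 0 then 1 else 0)"
definition ket1 :: "complex vec" where "ket1 = vec 2 (\<lambda>i. if i = 1 then 1 else 0)"

fun tensor_pow :: "complex vec \<Rightarrow> nat \<Rightarrow> complex vec" where
  "tensor_pow v 0 = vec 1 (\<lambda>_. 1)"
| "tensor_pow v (Suc r) = kron_vec v (tensor_pow v r)"

definition dicke :: "nat \<Rightarrow> nat \<Rightarrow> complex vec" where
  "dicke a b = vec (2 ^ a) (\<lambda>i. if weight a i = b then complex_of_real (1 / sqrt (real (a choose b))) else 0)"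

definition Xi_vec :: "nat \<Rightarrow> nat \<Rightarrow> nat \<Rightarrow> nat \<Rightarrow> complex vec" where
  "Xi_vec n m k l = kron_vec (tensor_pow ket1 l)
      (kron_vec (tensor_pow ket0 (k - l)) (dicke (n - m - (k - l) + (m - l)) (m - l)))"

definition projector :: "complex vec \<Rightarrow> complex mat" where
  "projector v = mat (dim_vec v) (dim_vec v) (\<lambda>(i, j). v $ i * cnj (v $ j))"

definition rho_mix :: "nat \<Rightarrow> nat \<Rightarrow> complex mat" where
  "rho_mix a b = mat (2 ^ a) (2 ^ a)
     (\<lambda>(i, j). if i = j \<and> weight a i = b then complex_of_real (1 / real (a choose b)) else 0)"

definition perm_op :: "nat \<Rightarrow> (nat \<Rightarrow> nat) \<Rightarrow> complex mat" where
  "perm_op n g = mat (2 ^ n) (2 ^ n)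
     (\<lambda>(r, c). if r = index_of_bits n (\<lambda>j. qubit n c (inv_into UNIV g j)) then 1 else 0)"

definition av_pi :: "nat \<Rightarrow> complex mat \<Rightarrow> complex mat" where
  "av_pi n \<rho> = mat (2 ^ n) (2 ^ n) (\<lambda>(r, c).
     (1 / of_nat (fact n)) * (\<Sum>g\<in>{g. g permutes {..<n}}.
        (perm_op n g * \<rho> * mat_adjoint (perm_op n g)) $$ (r, c)))"

text \<open>von Neumann entropy -tr(rho ln rho), via the eigenvalues (with multiplicity) of rho;
  natural logarithm, and 0 ln 0 = 0 (ln 0 = 0 in Isabelle).\<close>
definition vn_entropy :: "complex mat \<Rightarrow> real" where
  "vn_entropy \<rho> = (\<Sum>x\<in># proots (char_poly \<rho>). - (Re x * ln (Re x)))"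

end

theory Submission
  imports Defs "HOL-Analysis.Convex"
begin

text \<open>The state Xi_{n,m|k,l} is the uniform superposition psi of the basis states in a set A
  of C(n-k, m-l) strings of weight m, and av_pi of its projector is
  sigma = (1/n!) sum_g |pi(g) psi><pi(g) psi|. An eigenvalue of sigma is the Rayleigh quotient
  (1/n!) sum_g |<v, pi(g) psi>|^2 / |v|^2 of an eigenvector v. By Cauchy-Schwarz,
  |<v, pi(g) psi>|^2 <= sum_(a in A) |v_(g a)|^2, and averaging over g moves each a uniformly
  over the C(n, m) strings of weight m. Hence the spectrum of the trace-one matrix sigma lies
  in [0, |A| / C(n, m)], which forces S(sigma) >= ln C(n, m) - ln |A|. The states rho_mix a b
  are diagonal with C(a, b) equal nonzero eigenvalues, so their entropy is ln C(a, b).\<close>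

section \<open>Basis indices as sets of qubits\<close>

lemma qubit_le_1: "qubit a c j \<le> 1"
  by (simp add: qubit_def)

lemma qubit_Suc_Suc: "qubit (Suc a) c (Suc j) = qubit a c j"
  by (simp add: qubit_def)

lemma qubit_Suc_0: "qubit (Suc a) c 0 = c div 2 ^ a mod 2"
  by (simp add: qubit_def)

lemma index_of_bits_Suc:
  "index_of_bits (Suc a) b = b 0 * 2 ^ a + index_of_bits a (\<lambda>j. b (Suc j))"
  unfolding index_of_bits_def by (subst sum.lessThan_Suc_shift) simp

lemma index_of_bits_cong:
  "(\<And>j. j < a \<Longrightarrow> b j = b' j) \<Longrightarrow> index_of_bits a b = index_of_bits a b'"
  unfolding index_of_bits_def by (intro sum.cong) auto

lemma index_of_bits_qubit: "index_of_bits a (qubit a c) = c mod 2 ^ a"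
proof (induction a)
  case 0
  then show ?case by (simp add: index_of_bits_def)
next
  case (Suc a)
  have "index_of_bits (Suc a) (qubit (Suc a) c) = c div 2 ^ a mod 2 * 2 ^ a + c mod 2 ^ a"
    by (simp add: index_of_bits_Suc qubit_Suc_Suc qubit_Suc_0 Suc)
  also have "\<dots> = c mod 2 ^ Suc a"
    by (metis mod_mult2_eq power_Suc2 mult.commute)
  finally show ?case .
qed

lemma index_of_bits_less: "(\<And>j. j < a \<Longrightarrow> b j \<le> 1) \<Longrightarrow> index_of_bits a b < 2 ^ a"
proof (induction a arbitrary: b)
  case 0
  then show ?case by (simp add: index_of_bits_def)
next
  case (Suc a)
  have "index_of_bits a (\<lambda>j. b (Suc j)) < 2 ^ a"
    using Suc by auto
  moreover have "b 0 * 2 ^ a \<le> 1 * 2 ^ a"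
    using Suc by (intro mult_right_mono) auto
  ultimately have "b 0 * 2 ^ a + index_of_bits a (\<lambda>j. b (Suc j)) < 2 * 2 ^ a"
    by linarith
  then show ?case
    by (simp add: index_of_bits_Suc)
qed

lemma qubit_add_high: "j < a \<Longrightarrow> qubit a (x + y * 2 ^ a) j = qubit a x j"
proof -
  assume "j < a"
  then have "a = (a - 1 - j) + Suc j"
    by arith
  then have "(2::nat) ^ a = 2 ^ (a - 1 - j) * (2 * 2 ^ j)"
    by (metis power_add power_Suc)
  then have "(x + y * 2 ^ a) div 2 ^ (a - 1 - j)
      = (x + (y * 2 ^ j * 2) * 2 ^ (a - 1 - j)) div 2 ^ (a - 1 - j)"
    by (simp add: ac_simps)
  also have "\<dots> = x div 2 ^ (a - 1 - j) + y * 2 ^ j * 2"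
    by simp
  finally show ?thesis
    unfolding qubit_def by simp
qed

lemma qubit_index_of_bits:
  "(\<And>j. j < a \<Longrightarrow> b j \<le> 1) \<Longrightarrow> j < a \<Longrightarrow> qubit a (index_of_bits a b) j = b j"
proof (induction a arbitrary: b j)
  case 0
  then show ?case by simp
next
  case (Suc a)
  have low: "index_of_bits a (\<lambda>j. b (Suc j)) < 2 ^ a"
    using Suc.prems by (intro index_of_bits_less) auto
  show ?case
  proof (cases j)
    case 0
    have "(b 0 * 2 ^ a + index_of_bits a (\<lambda>j. b (Suc j))) div 2 ^ a = b 0"
      using low by simp
    moreover have "b 0 \<le> 1"
      using Suc.prems by auto
    ultimately show ?thesis
      using 0 by (auto simp: index_of_bits_Suc qubit_Suc_0)
  next
    case (Suc j')
    then have "qubit a (index_of_bits a (\<lambda>j. b (Suc j)) + b 0 * 2 ^ a) j' = b (Suc j')"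
      using Suc.IH[of "\<lambda>j. b (Suc j)" j'] Suc.prems by (simp add: qubit_add_high)
    then show ?thesis
      using Suc by (simp add: index_of_bits_Suc qubit_Suc_Suc add.commute)
  qed
qed

definition bitset :: "nat \<Rightarrow> nat \<Rightarrow> nat set" where
  "bitset a i = {j. j < a \<and> qubit a i j = 1}"

definition index_of_set :: "nat \<Rightarrow> nat set \<Rightarrow> nat" where
  "index_of_set a S = index_of_bits a (\<lambda>j. if j \<in> S then 1 else 0)"

lemma weight_eq_card_bitset: "weight a i = card (bitset a i)"
  by (simp add: weight_def bitset_def)

lemma bitset_subset: "bitset a i \<subseteq> {..<a}"
  by (auto simp: bitset_def)

lemma finite_bitset [simp]: "finite (bitset a i)"
  using bitset_subset finite_subset by blast

lemma index_of_set_less: "index_of_set a S < 2 ^ a"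
  unfolding index_of_set_def by (rule index_of_bits_less) auto

lemma bitset_index_of_set: "S \<subseteq> {..<a} \<Longrightarrow> bitset a (index_of_set a S) = S"
  unfolding bitset_def index_of_set_def by (auto simp: qubit_index_of_bits split: if_splits)

lemma index_of_set_bitset: "i < 2 ^ a \<Longrightarrow> index_of_set a (bitset a i) = i"
proof -
  assume "i < 2 ^ a"
  have "qubit a i j = 0 \<or> qubit a i j = 1" for j
    using qubit_le_1[of a i j] by linarith
  then have "index_of_set a (bitset a i) = index_of_bits a (qubit a i)"
    unfolding index_of_set_def bitset_def by (intro index_of_bits_cong) auto
  with \<open>i < 2 ^ a\<close> show ?thesis
    by (simp add: index_of_bits_qubit)
qed

lemma inj_on_bitset: "inj_on (bitset a) {..<2 ^ a}"
  by (rule inj_on_inverseI[where g = "index_of_set a"]) (simp add: index_of_set_bitset)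

definition weight_class :: "nat \<Rightarrow> nat \<Rightarrow> nat set" where
  "weight_class a b = {i. i < 2 ^ a \<and> weight a i = b}"

lemma weight_class_subset: "weight_class a b \<subseteq> {..<2 ^ a}"
  by (auto simp: weight_class_def)

lemma finite_weight_class [simp]: "finite (weight_class a b)"
  using weight_class_subset finite_subset by blast

lemma card_weight_class: "card (weight_class a b) = a choose b"
proof -
  have "bij_betw (bitset a) (weight_class a b) {S. S \<subseteq> {..<a} \<and> card S = b}"
    by (rule bij_betw_byWitness[where f' = "index_of_set a"])
      (auto simp: weight_class_def index_of_set_bitset bitset_index_of_set weight_eq_card_bitset
        index_of_set_less bitset_subset dest: subsetD[OF bitset_subset])
  then show ?thesis
    using n_subsets[of "{..<a}" b] by (simp add: bij_betw_same_card)
qed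

lemma card_subset_weight_class:
  assumes "A \<subseteq> weight_class n m" and "A \<noteq> {}"
  shows "0 < card A" and "card A \<le> n choose m"
  using assms finite_subset[OF _ finite_weight_class] card_mono[OF finite_weight_class]
  by (auto simp: card_gt_0_iff card_weight_class)

lemma weight_split: "weight (a + b) c = weight a (c div 2 ^ b) + weight b c"
proof -
  have hi: "qubit (a + b) c j = qubit a (c div 2 ^ b) j" if "j < a" for j
  proof -
    have "a + b - 1 - j = b + (a - 1 - j)"
      using that by arith
    then show ?thesis
      unfolding qubit_def by (simp add: power_add div_mult2_eq)
  qed
  have lo: "qubit (a + b) c (a + j) = qubit b c j" for j
    unfolding qubit_def by (simp add: diff_diff_add)
  have "bitset (a + b) c = bitset a (c div 2 ^ b) \<union> (+) a ` bitset b c"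
  proof (rule Set.set_eqI)
    fix x
    show "x \<in> bitset (a + b) c \<longleftrightarrow> x \<in> bitset a (c div 2 ^ b) \<union> (+) a ` bitset b c"
    proof (cases "x < a")
      case True
      then show ?thesis by (auto simp: bitset_def hi)
    next
      case False
      then obtain j where "x = a + j"
        by (metis le_add_diff_inverse not_less)
      then show ?thesis
        using False by (auto simp: bitset_def lo)
    qed
  qed
  moreover have "bitset a (c div 2 ^ b) \<inter> (+) a ` bitset b c = {}"
    by (auto simp: bitset_def)
  ultimately show ?thesis
    by (simp add: weight_eq_card_bitset card_Un_disjoint card_image)
qed

lemma weight_concat: "j < 2 ^ b \<Longrightarrow> weight (a + b) (i * 2 ^ b + j) = weight a i + weight b j"
proof -
  assume j: "j < 2 ^ b"
  have "weight b (j + i * 2 ^ b) = weight b j"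
    unfolding weight_def by (intro arg_cong[where f = card]) (auto simp: qubit_add_high)
  then show ?thesis
    using weight_split[of a b "i * 2 ^ b + j"] j by (simp add: add.commute)
qed

lemma weight_zero: "weight a 0 = 0"
  by (simp add: weight_def qubit_def)

lemma weight_all_ones: "weight a (2 ^ a - 1) = a"
proof (induction a)
  case 0
  then show ?case by (simp add: weight_def)
next
  case (Suc a)
  have "(2::nat) ^ Suc a - 1 = 1 * 2 ^ a + (2 ^ a - 1)"
    by simp
  moreover have "weight 1 1 = 1"
    by (simp add: weight_def qubit_def)
  ultimately show ?case
    using weight_concat[of "2 ^ a - 1" a 1 1] Suc by simp
qed

section \<open>Permutations of the qubits acting on basis indices\<close>

definition permute_index :: "nat \<Rightarrow> (nat \<Rightarrow> nat) \<Rightarrow> nat \<Rightarrow> nat" where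
  "permute_index n g c = index_of_bits n (\<lambda>j. qubit n c (inv_into UNIV g j))"

lemma permute_index_less: "permute_index n g c < 2 ^ n"
  unfolding permute_index_def by (rule index_of_bits_less) (rule qubit_le_1)

lemma qubit_permute_index:
  "j < n \<Longrightarrow> qubit n (permute_index n g c) j = qubit n c (inv_into UNIV g j)"
  unfolding permute_index_def by (rule qubit_index_of_bits) (rule qubit_le_1)

lemma bitset_permute_index:
  assumes g: "g permutes {..<n}"
  shows "bitset n (permute_index n g c) = g ` bitset n c"
proof (rule Set.set_eqI)
  fix j
  have inv_less: "inv_into UNIV g j < n \<longleftrightarrow> j < n"
    by (metis g lessThan_iff permutes_inv permutes_in_image permutes_inverses(1))
  have "j \<in> bitset n (permute_index n g c) \<longleftrightarrow> j < n \<and> qubit n c (inv_into UNIV g j) = 1"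
    by (auto simp: bitset_def qubit_permute_index)
  also have "\<dots> \<longleftrightarrow> inv_into UNIV g j \<in> bitset n c"
    using inv_less by (auto simp: bitset_def)
  also have "\<dots> \<longleftrightarrow> j \<in> g ` bitset n c"
    by (metis g image_iff permutes_inverses(1,2))
  finally show "j \<in> bitset n (permute_index n g c) \<longleftrightarrow> j \<in> g ` bitset n c" .
qed

lemma weight_permute_index: "g permutes {..<n} \<Longrightarrow> weight n (permute_index n g c) = weight n c"
  by (simp add: weight_eq_card_bitset bitset_permute_index card_image permutes_inj_on)

lemma permute_index_compose:
  assumes "g permutes {..<n}" and "h permutes {..<n}"
  shows "permute_index n g (permute_index n h c) = permute_index n (g \<circ> h) c"
proof (rule inj_onD[OF inj_on_bitset])
  show "bitset n (permute_index n g (permute_index n h c)) = bitset n (permute_index n (g \<circ> h) c)"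
    using assms by (simp add: bitset_permute_index permutes_compose image_comp)
qed (simp_all add: permute_index_less)

lemma inj_on_permute_index:
  assumes g: "g permutes {..<n}"
  shows "inj_on (permute_index n g) {..<2 ^ n}"
proof (rule inj_onI)
  fix c c'
  assume "c \<in> {..<2 ^ n}" "c' \<in> {..<2 ^ n}" "permute_index n g c = permute_index n g c'"
  moreover from this have "bitset n c = bitset n c'"
    using bitset_permute_index[OF g] inj_image_eq_iff[OF permutes_inj[OF g]] by metis
  ultimately show "c = c'"
    using inj_on_bitset by (auto dest: inj_onD)
qed

lemma bij_betw_permute_index:
  assumes "g permutes {..<n}"
  shows "bij_betw (permute_index n g) {..<2 ^ n} {..<2 ^ n}"
  using assms by (simp add: bij_betw_def inj_on_permute_index endo_inj_surj permute_index_less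
      image_subset_iff)

lemma bij_betw_permute_index_weight_class:
  assumes g: "g permutes {..<n}"
  shows "bij_betw (permute_index n g) (weight_class n w) (weight_class n w)"
proof -
  have "inj_on (permute_index n g) (weight_class n w)"
    using inj_on_permute_index[OF g] weight_class_subset by (rule inj_on_subset)
  moreover have "permute_index n g ` weight_class n w \<subseteq> weight_class n w"
    by (auto simp: weight_class_def permute_index_less weight_permute_index[OF g])
  ultimately show ?thesis
    by (simp add: bij_betw_def endo_inj_surj)
qed

lemma permutes_mapping_subset:
  assumes "finite U" and "S \<subseteq> U" and "T \<subseteq> U" and "card S = card T"
  obtains h where "h permutes U" and "h ` S = T"
proof -
  obtain f1 where f1: "bij_betw f1 S T"
    using assms finite_same_card_bij finite_subset by metis
  have "card (U - S) = card (U - T)"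
    using assms by (simp add: card_Diff_subset finite_subset)
  then obtain f2 where f2: "bij_betw f2 (U - S) (U - T)"
    using assms finite_same_card_bij by (metis finite_Diff)
  define h where "h x = (if x \<in> S then f1 x else if x \<in> U then f2 x else x)" for x
  have "bij_betw h S T"
    using f1 by (rule bij_betw_cong[THEN iffD1, rotated]) (simp add: h_def)
  moreover have "bij_betw h (U - S) (U - T)"
    using f2 by (rule bij_betw_cong[THEN iffD1, rotated]) (simp add: h_def)
  ultimately have "bij_betw h (S \<union> (U - S)) (T \<union> (U - T))"
    by (rule bij_betw_combine) blast
  then have "bij_betw h U U"
    using assms by (simp add: Un_absorb1)
  then have "h permutes U"
    by (rule bij_imp_permutes) (use assms in \<open>auto simp: h_def\<close>)
  moreover have "h ` S = T"
    using \<open>bij_betw h S T\<close> by (simp add: bij_betw_def)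
  ultimately show ?thesis
    using that by blast
qed

lemma permute_index_transitive:
  assumes "a \<in> weight_class n w" and "a' \<in> weight_class n w"
  obtains h where "h permutes {..<n}" and "permute_index n h a = a'"
proof -
  have "card (bitset n a) = card (bitset n a')"
    using assms by (simp add: weight_class_def weight_eq_card_bitset)
  then obtain h where h: "h permutes {..<n}" "h ` bitset n a = bitset n a'"
    by (rule permutes_mapping_subset[OF finite_lessThan bitset_subset bitset_subset])
  then have "permute_index n h a = a'"
    using assms by (intro inj_onD[OF inj_on_bitset])
      (auto simp: weight_class_def bitset_permute_index permute_index_less)
  with h show ?thesis
    using that by blast
qed

lemma sum_permutes_permute_index:
  fixes f :: "nat \<Rightarrow> real"
  assumes "a \<in> weight_class n w"
  shows "real (n choose w) * (\<Sum>g | g permutes {..<n}. f (permute_index n g a))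
       = fact n * (\<Sum>y\<in>weight_class n w. f y)"
proof -
  let ?W = "weight_class n w" and ?G = "{g. g permutes {..<n}}"
  have orbit: "(\<Sum>g\<in>?G. f (permute_index n g a')) = (\<Sum>g\<in>?G. f (permute_index n g a))"
    if a': "a' \<in> ?W" for a'
  proof -
    obtain h where h: "h permutes {..<n}" "permute_index n h a = a'"
      using permute_index_transitive[OF assms a'] by blast
    have "(\<Sum>g\<in>?G. f (permute_index n g a')) = (\<Sum>g\<in>?G. f (permute_index n (g \<circ> h) a))"
      using h by (intro sum.cong) (auto simp: permute_index_compose)
    also have "\<dots> = (\<Sum>g\<in>?G. f (permute_index n g a))"
      using sum_permutations_compose_right[OF h(1), of "\<lambda>g. f (permute_index n g a)"] by simp
    finally show ?thesis .
  qed
  have "real (n choose w) * (\<Sum>g\<in>?G. f (permute_index n g a))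
      = (\<Sum>a'\<in>?W. \<Sum>g\<in>?G. f (permute_index n g a'))"
    by (simp add: orbit card_weight_class)
  also have "\<dots> = (\<Sum>g\<in>?G. \<Sum>a'\<in>?W. f (permute_index n g a'))"
    by (rule sum.swap)
  also have "\<dots> = (\<Sum>g\<in>?G. \<Sum>y\<in>?W. f y)"
    using bij_betw_permute_index_weight_class by (intro sum.cong refl sum.reindex_bij_betw) auto
  also have "\<dots> = fact n * (\<Sum>y\<in>?W. f y)"
    using card_permutations[of "{..<n}" n] by simp
  finally show ?thesis .
qed

section \<open>Uniform superpositions of basis states\<close>

definition uniform_vec :: "nat \<Rightarrow> nat set \<Rightarrow> complex vec" where
  "uniform_vec d A = vec d (\<lambda>i. if i \<in> A then complex_of_real (1 / sqrt (real (card A))) else 0)"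

lemma dim_uniform_vec [simp]: "dim_vec (uniform_vec d A) = d"
  by (simp add: uniform_vec_def)

lemma sum_cmod_uniform_vec:
  assumes "A \<subseteq> {..<d}" and "A \<noteq> {}"
  shows "(\<Sum>r<d. (cmod (uniform_vec d A $ r))\<^sup>2) = 1"
proof -
  have "finite A"
    using assms finite_subset by blast
  have "(\<Sum>r<d. (cmod (uniform_vec d A $ r))\<^sup>2) = (\<Sum>r<d. if r \<in> A then 1 / real (card A) else 0)"
    by (intro sum.cong refl) (auto simp: uniform_vec_def power_divide norm_divide)
  also have "\<dots> = (\<Sum>r\<in>A. 1 / real (card A))"
    using assms by (simp add: Int_absorb1 flip: sum.inter_restrict)
  also have "\<dots> = 1"
    using \<open>finite A\<close> \<open>A \<noteq> {}\<close> by simp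
  finally show ?thesis .
qed

lemma unit_vec_eq_uniform_vec: "unit_vec d j = uniform_vec d {j}"
  by (auto simp: unit_vec_def uniform_vec_def)

lemma kron_unit_vec_uniform_vec:
  assumes i: "i < p" and A: "A \<subseteq> {..<q}"
  shows "kron_vec (unit_vec p i) (uniform_vec q A) = uniform_vec (p * q) ((+) (i * q) ` A)"
proof (rule eq_vecI)
  fix c
  assume "c < dim_vec (uniform_vec (p * q) ((+) (i * q) ` A))"
  then have c: "c < p * q"
    by simp
  then have "q > 0"
    by (cases "q = 0") auto
  have "c div q < p"
    using c by (simp add: less_mult_imp_div_less)
  moreover have "c \<in> (+) (i * q) ` A \<longleftrightarrow> c div q = i \<and> c mod q \<in> A"
  proof
    assume "c \<in> (+) (i * q) ` A"
    then obtain d where "d \<in> A" "c = i * q + d"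
      by blast
    then show "c div q = i \<and> c mod q \<in> A"
      using A by auto
  next
    assume "c div q = i \<and> c mod q \<in> A"
    then show "c \<in> (+) (i * q) ` A"
      by (metis div_mult_mod_eq image_eqI mult.commute)
  qed
  moreover have "card ((+) (i * q) ` A) = card A"
    by (simp add: card_image)
  ultimately show "kron_vec (unit_vec p i) (uniform_vec q A) $ c
      = uniform_vec (p * q) ((+) (i * q) ` A) $ c"
    using c \<open>q > 0\<close> i by (simp add: kron_vec_def uniform_vec_def)
qed (simp add: kron_vec_def)

lemma kron_unit_vec_unit_vec:
  assumes "i < p" and "j < q"
  shows "kron_vec (unit_vec p i) (unit_vec q j) = unit_vec (p * q) (i * q + j)"
proof -
  have "kron_vec (unit_vec p i) (uniform_vec q {j}) = uniform_vec (p * q) {i * q + j}"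
    using assms kron_unit_vec_uniform_vec[of i p "{j}" q] by simp
  then show ?thesis
    by (simp only: unit_vec_eq_uniform_vec)
qed

lemma tensor_pow_ket1: "tensor_pow ket1 r = unit_vec (2 ^ r) (2 ^ r - 1)"
proof (induction r)
  case 0
  then show ?case by (auto simp: unit_vec_def)
next
  case (Suc r)
  have "ket1 = unit_vec 2 1"
    by (simp add: ket1_def unit_vec_def)
  moreover have "1 * 2 ^ r + (2 ^ r - 1) = (2::nat) ^ Suc r - 1"
    by simp
  ultimately show ?case
    using Suc kron_unit_vec_unit_vec[of 1 2 "2 ^ r - 1" "2 ^ r"] by simp
qed

lemma tensor_pow_ket0: "tensor_pow ket0 r = unit_vec (2 ^ r) 0"
proof (induction r)
  case 0
  then show ?case by (auto simp: unit_vec_def)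
next
  case (Suc r)
  have "ket0 = unit_vec 2 0"
    by (simp add: ket0_def unit_vec_def)
  then show ?case
    using Suc kron_unit_vec_unit_vec[of 0 2 0 "2 ^ r"] by simp
qed

lemma dicke_eq_uniform_vec: "dicke a b = uniform_vec (2 ^ a) (weight_class a b)"
  unfolding uniform_vec_def card_weight_class
  by (rule eq_vecI) (auto simp: dicke_def weight_class_def)

lemma Xi_vec_eq_uniform_vec:
  assumes "l \<le> k" and "k \<le> n" and "l \<le> m" and "k - l \<le> n - m" and "m \<le> n"
  shows "Xi_vec n m k l
    = uniform_vec (2 ^ n) ((+) ((2 ^ l - 1) * 2 ^ (n - l)) ` weight_class (n - k) (m - l))"
proof -
  let ?W = "weight_class (n - k) (m - l)"
  have "n - m - (k - l) + (m - l) = n - k" and "2 ^ (k - l) * 2 ^ (n - k) = (2::nat) ^ (n - l)"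
    and "2 ^ l * 2 ^ (n - l) = (2::nat) ^ n"
    using assms by (simp_all flip: power_add)
  moreover have "?W \<subseteq> {..<2 ^ (n - l)}"
    using weight_class_subset[of "n - k" "m - l"] assms
    by (meson lessThan_subset_iff one_le_numeral power_increasing diff_le_mono2 order_trans)
  ultimately show ?thesis
    unfolding Xi_vec_def tensor_pow_ket1 tensor_pow_ket0 dicke_eq_uniform_vec
    using kron_unit_vec_uniform_vec[of "2 ^ l - 1" "2 ^ l" ?W "2 ^ (n - l)"]
    by (simp add: kron_unit_vec_uniform_vec weight_class_subset)
qed

lemma weight_class_prepend_ones:
  assumes "d \<in> weight_class b w" and "b \<le> c"
  shows "(2 ^ a - 1) * 2 ^ c + d \<in> weight_class (a + c) (a + w)"
proof -
  have "d < 2 ^ b" "weight b d = w"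
    using assms(1) by (auto simp: weight_class_def)
  moreover have "(2::nat) ^ b \<le> 2 ^ c"
    using assms(2) by simp
  ultimately have d: "d < 2 ^ c"
    by linarith
  have "weight (c - b + b) (0 * 2 ^ b + d) = weight b d"
    using weight_concat[of d b "c - b" 0] \<open>d < 2 ^ b\<close> by (simp add: weight_zero)
  then have "weight c d = w"
    using assms \<open>weight b d = w\<close> by simp
  moreover have "(2 ^ a - 1) * 2 ^ c + d < (2 ^ a - 1 + 1) * 2 ^ c"
    using d by (simp only: distrib_right mult_1)
  moreover have "weight (a + c) ((2 ^ a - 1) * 2 ^ c + d) = a + weight c d"
    using weight_concat[OF d, of a "2 ^ a - 1"] weight_all_ones[of a] by simp
  ultimately show ?thesis
    by (simp add: weight_class_def power_add)
qed

section \<open>Traces, eigenvalues and von Neumann entropy\<close>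

definition mat_trace :: "'a::comm_ring_1 mat \<Rightarrow> 'a" where
  "mat_trace A = (\<Sum>i<dim_row A. A $$ (i, i))"

lemma mat_trace_mult_comm:
  assumes "A \<in> carrier_mat n m" and "B \<in> carrier_mat m n"
  shows "mat_trace (A * B) = mat_trace (B * A)"
proof -
  have "mat_trace (A * B) = (\<Sum>i<n. \<Sum>j<m. A $$ (i, j) * B $$ (j, i))"
    using assms by (simp add: mat_trace_def scalar_prod_def atLeast0LessThan)
  also have "\<dots> = (\<Sum>j<m. \<Sum>i<n. B $$ (j, i) * A $$ (i, j))"
    by (subst sum.swap) (simp add: mult.commute)
  also have "\<dots> = mat_trace (B * A)"
    using assms by (simp add: mat_trace_def scalar_prod_def atLeast0LessThan)
  finally show ?thesis .
qed

lemma mat_trace_similar_mat_wit: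
  assumes "similar_mat_wit A B P Q"
  shows "mat_trace A = mat_trace B"
proof -
  obtain n where c: "B \<in> carrier_mat n n" "P \<in> carrier_mat n n" "Q \<in> carrier_mat n n"
    and QP: "Q * P = 1\<^sub>m n" and A: "A = P * B * Q"
    using assms unfolding similar_mat_wit_def Let_def by auto
  have "mat_trace A = mat_trace (Q * (P * B))"
    unfolding A using c by (intro mat_trace_mult_comm) auto
  also have "Q * (P * B) = (Q * P) * B"
    using c by (intro assoc_mult_mat[symmetric]) auto
  also have "\<dots> = B"
    using c QP by simp
  finally show ?thesis .
qed

lemma sum_list_diag_mat: "sum_list (diag_mat A) = mat_trace A"
  by (simp add: diag_mat_def mat_trace_def sum_list_sum_nth atLeast0LessThan)

lemma proots_prod_list_linear: "proots (\<Prod>a\<leftarrow>as. [:- a, 1:]) = mset (as :: 'a::idom list)"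
proof (induction as)
  case (Cons a as)
  have "(\<Prod>a\<leftarrow>as. [:- a, 1:]) \<noteq> 0"
    by (auto simp: prod_list_zero_iff)
  then have "proots ([:- a, 1:] * (\<Prod>a\<leftarrow>as. [:- a, 1:])) = {#a#} + mset as"
    using Cons by (subst proots_mult) auto
  then show ?case
    by simp
qed simp

lemma vn_entropy_char_poly:
  "char_poly M = (\<Prod>a\<leftarrow>as. [:- a, 1:]) \<Longrightarrow> vn_entropy M = (\<Sum>x\<leftarrow>as. - (Re x * ln (Re x)))"
  by (simp add: vn_entropy_def proots_prod_list_linear flip: sum_mset_sum_list)

lemma vn_entropy_ge_neg_ln:
  assumes M: "M \<in> carrier_mat d d" and trace: "mat_trace M = 1"
    and spectrum: "\<And>x. eigenvalue M x \<Longrightarrow> 0 \<le> Re x \<and> Re x \<le> c"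
  shows "- ln c \<le> vn_entropy M"
proof -
  obtain as where cp: "char_poly M = (\<Prod>a\<leftarrow>as. [:- a, 1:])"
    using char_poly_factorized[OF M] by blast
  obtain B P Q where "schur_decomposition M as = (B, P, Q)"
    by (cases "schur_decomposition M as")
  with schur_decomposition[OF M cp] have "similar_mat_wit M B P Q" and "diag_mat B = as"
    by auto
  then have "sum_list as = 1"
    using trace by (metis sum_list_diag_mat mat_trace_similar_mat_wit)
  have "Re x * (- ln c) \<le> - (Re x * ln (Re x))" if "x \<in> set as" for x
  proof -
    have "poly (char_poly M) x = 0"
      using that by (simp add: cp poly_prod_list prod_list_zero_iff)
    then have x: "0 \<le> Re x" "Re x \<le> c"
      using spectrum eigenvalue_root_char_poly[OF M] by auto
    show ?thesis
    proof (cases "Re x = 0")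
      case False
      then have "ln (Re x) \<le> ln c"
        using x by simp
      then show ?thesis
        using x by (simp add: mult_left_mono)
    qed simp
  qed
  then have "(\<Sum>x\<leftarrow>as. Re x * (- ln c)) \<le> vn_entropy M"
    by (simp add: vn_entropy_char_poly[OF cp] sum_list_mono)
  moreover have "(\<Sum>x\<leftarrow>as. Re x * (- ln c)) = Re (sum_list as) * (- ln c)"
    by (induction as) (simp_all add: algebra_simps)
  ultimately show ?thesis
    using \<open>sum_list as = 1\<close> by simp
qed

lemma vn_entropy_rho_mix:
  assumes "b \<le> a"
  shows "vn_entropy (rho_mix a b) = ln (real (a choose b))"
proof -
  let ?R = "rho_mix a b" and ?C = "real (a choose b)"
  have "?C > 0"
    using assms by simp
  have R: "?R \<in> carrier_mat (2 ^ a) (2 ^ a)" and "upper_triangular ?R"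
    by (auto simp: rho_mix_def upper_triangular_def)
  then have "vn_entropy ?R = (\<Sum>x\<leftarrow>diag_mat ?R. - (Re x * ln (Re x)))"
    by (intro vn_entropy_char_poly char_poly_upper_triangular)
  also have "\<dots> = (\<Sum>i<2 ^ a. if i \<in> weight_class a b then ln ?C / ?C else 0)"
    using R \<open>?C > 0\<close>
    by (simp add: diag_mat_def sum_list_sum_nth atLeast0LessThan rho_mix_def weight_class_def)
      (intro sum.cong refl, simp add: ln_div)
  also have "\<dots> = (\<Sum>i\<in>weight_class a b. ln ?C / ?C)"
    using weight_class_subset[of a b] by (simp flip: sum.inter_restrict add: Int_absorb1)
  also have "\<dots> = ln ?C"
    using \<open>?C > 0\<close> by (simp add: card_weight_class)
  finally show ?thesis .
qed

lemma sum_indicator_bij_betw: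
  fixes X :: "nat \<Rightarrow> 'a::semiring_1"
  assumes t: "bij_betw t {..<d} {..<d}" and r: "r < d"
  shows "(\<Sum>a<d. (if r = t a then 1 else 0) * X a) = X (inv_into {..<d} t r)"
proof -
  have r_image: "r \<in> t ` {..<d}"
    using t r by (simp add: bij_betw_def)
  have "(\<Sum>a<d. (if r = t a then 1 else 0) * X a) = (\<Sum>a<d. if a = inv_into {..<d} t r then X a else 0)"
    using t r_image by (intro sum.cong refl)
      (auto simp: bij_betw_def inv_into_f_f f_inv_into_f)
  also have "\<dots> = X (inv_into {..<d} t r)"
    using inv_into_into[OF r_image] by simp
  finally show ?thesis .
qed

lemma permutation_mat_conjugate_index:
  fixes B P :: "complex mat"
  assumes t: "bij_betw t {..<d} {..<d}" and P: "P \<in> carrier_mat d d" and B: "B \<in> carrier_mat d d"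
    and P_index: "\<And>r c. r < d \<Longrightarrow> c < d \<Longrightarrow> P $$ (r, c) = (if r = t c then 1 else 0)"
    and r: "r < d" and c: "c < d"
  shows "(P * B * mat_adjoint P) $$ (r, c) = B $$ (inv_into {..<d} t r, inv_into {..<d} t c)"
proof -
  let ?s = "inv_into {..<d} t"
  define C where "C = P * B"
  have C: "C \<in> carrier_mat d d"
    using P B by (simp add: C_def)
  have C_index: "C $$ (r, b) = B $$ (?s r, b)" if "b < d" for b
  proof -
    have "C $$ (r, b) = (\<Sum>a<d. (if r = t a then 1 else 0) * B $$ (a, b))"
      using P B r that by (auto simp: C_def scalar_prod_def atLeast0LessThan P_index intro!: sum.cong)
    also have "\<dots> = B $$ (?s r, b)"
      by (rule sum_indicator_bij_betw[OF t r])
    finally show ?thesis .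
  qed
  have "(C * mat_adjoint P) $$ (r, c) = (\<Sum>b<d. (if c = t b then 1 else 0) * B $$ (?s r, b))"
    using P C r c
    by (auto simp: scalar_prod_def atLeast0LessThan mat_adjoint_def mat_of_rows_index C_index P_index
        intro!: sum.cong)
  also have "\<dots> = B $$ (?s r, ?s c)"
    by (rule sum_indicator_bij_betw[OF t c])
  finally show ?thesis
    by (simp add: C_def)
qed

lemma eigenvector_norm_pos:
  assumes "eigenvector S v x" and "S \<in> carrier_mat d d"
  shows "0 < (\<Sum>r<d. (cmod (v $ r))\<^sup>2)"
proof -
  have v: "v \<in> carrier_vec d" "v \<noteq> 0\<^sub>v d"
    using assms unfolding eigenvector_def by auto
  then obtain r where "r < d" "v $ r \<noteq> 0"
    by (metis carrier_vecD eq_vecI index_zero_vec(1) index_zero_vec(2))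
  then have "0 < (cmod (v $ r))\<^sup>2" and "(cmod (v $ r))\<^sup>2 \<le> (\<Sum>r<d. (cmod (v $ r))\<^sup>2)"
    by (auto intro: member_le_sum)
  then show ?thesis
    by linarith
qed

lemma eigenvalue_sum_of_projectors:
  fixes S :: "complex mat" and \<phi> :: "'g \<Rightarrow> nat \<Rightarrow> complex"
  assumes S: "S \<in> carrier_mat d d"
    and S_index: "\<And>r c. r < d \<Longrightarrow> c < d \<Longrightarrow>
      S $$ (r, c) = of_real \<kappa> * (\<Sum>g\<in>G. \<phi> g r * cnj (\<phi> g c))"
    and eigen: "eigenvector S v x"
  shows "x = of_real (\<kappa> * (\<Sum>g\<in>G. (cmod (\<Sum>r<d. cnj (v $ r) * \<phi> g r))\<^sup>2)
                      / (\<Sum>r<d. (cmod (v $ r))\<^sup>2))"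
proof -
  have v: "v \<in> carrier_vec d" and Sv: "S *\<^sub>v v = x \<cdot>\<^sub>v v"
    using eigen S unfolding eigenvector_def by auto
  define N where "N = (\<Sum>r<d. (cmod (v $ r))\<^sup>2)"
  define ov where "ov g = (\<Sum>r<d. cnj (v $ r) * \<phi> g r)" for g
  define F where "F g r c = (cnj (v $ r) * \<phi> g r) * (v $ c * cnj (\<phi> g c))" for g r c
  have "N > 0"
    unfolding N_def by (rule eigenvector_norm_pos[OF eigen S])
  have "of_real N = (\<Sum>r<d. v $ r * cnj (v $ r))"
    unfolding N_def of_real_sum by (simp only: complex_norm_square)
  then have "x * of_real N = (\<Sum>r<d. cnj (v $ r) * (S *\<^sub>v v) $ r)"
    using v by (simp add: Sv sum_distrib_left ac_simps)
  also have "\<dots> = (\<Sum>r<d. \<Sum>c<d. of_real \<kappa> * (\<Sum>g\<in>G. F g r c))"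
    using S v by (auto simp: scalar_prod_def atLeast0LessThan S_index sum_distrib_left
        sum_distrib_right F_def ac_simps intro!: sum.cong)
  also have "\<dots> = of_real \<kappa> * (\<Sum>r<d. \<Sum>c<d. \<Sum>g\<in>G. F g r c)"
    by (simp only: sum_distrib_left)
  also have "(\<Sum>r<d. \<Sum>c<d. \<Sum>g\<in>G. F g r c) = (\<Sum>r<d. \<Sum>g\<in>G. \<Sum>c<d. F g r c)"
    by (rule sum.cong[OF refl], rule sum.swap)
  also have "\<dots> = (\<Sum>g\<in>G. \<Sum>r<d. \<Sum>c<d. F g r c)"
    by (rule sum.swap)
  also have "\<dots> = (\<Sum>g\<in>G. ov g * cnj (ov g))"
    by (simp add: F_def ov_def sum_product cnj_sum)
  also have "of_real \<kappa> * \<dots> = of_real (\<kappa> * (\<Sum>g\<in>G. (cmod (ov g))\<^sup>2))"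
    by (simp only: of_real_mult of_real_sum complex_norm_square)
  finally have "x * of_real N = of_real (\<kappa> * (\<Sum>g\<in>G. (cmod (ov g))\<^sup>2))" .
  moreover have "of_real N \<noteq> (0::complex)"
    using \<open>N > 0\<close> by simp
  ultimately have "x = of_real (\<kappa> * (\<Sum>g\<in>G. (cmod (ov g))\<^sup>2)) / of_real N"
    by (simp add: field_simps)
  then show ?thesis
    by (simp only: ov_def N_def of_real_divide)
qed

lemma norm_sum_squared_le:
  fixes z :: "'a \<Rightarrow> 'b::real_normed_vector"
  shows "(norm (\<Sum>a\<in>A. z a))\<^sup>2 \<le> card A * (\<Sum>a\<in>A. (norm (z a))\<^sup>2)"
proof -
  have "(norm (\<Sum>a\<in>A. z a))\<^sup>2 \<le> (\<Sum>a\<in>A. norm (z a))\<^sup>2"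
    by (intro power_mono norm_sum) simp
  also have "\<dots> \<le> card A * (\<Sum>a\<in>A. (norm (z a))\<^sup>2)"
    using sum_squared_le_sum_of_squares[of "\<lambda>a. norm (z a)" A] by (simp add: mult.commute)
  finally show ?thesis .
qed

section \<open>Spectrum of the symmetrized state\<close>

lemma perm_op_index:
  "r < 2 ^ n \<Longrightarrow> c < 2 ^ n \<Longrightarrow> perm_op n g $$ (r, c) = (if r = permute_index n g c then 1 else 0)"
  by (simp add: perm_op_def permute_index_def)

lemma perm_op_carrier: "perm_op n g \<in> carrier_mat (2 ^ n) (2 ^ n)"
  by (simp add: perm_op_def)

lemma inv_permute_index_less:
  "g permutes {..<n} \<Longrightarrow> r < 2 ^ n \<Longrightarrow> inv_into {..<2 ^ n} (permute_index n g) r < 2 ^ n"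
  by (metis bij_betw_imp_surj_on bij_betw_permute_index inv_into_into lessThan_iff)

lemma av_pi_projector_index:
  assumes \<psi>: "dim_vec \<psi> = 2 ^ n" and r: "r < 2 ^ n" and c: "c < 2 ^ n"
  shows "av_pi n (projector \<psi>) $$ (r, c) = 1 / of_nat (fact n) *
    (\<Sum>g | g permutes {..<n}. \<psi> $ (inv_into {..<2 ^ n} (permute_index n g) r)
       * cnj (\<psi> $ (inv_into {..<2 ^ n} (permute_index n g) c)))"
proof -
  have "(perm_op n g * projector \<psi> * mat_adjoint (perm_op n g)) $$ (r, c)
      = \<psi> $ (inv_into {..<2 ^ n} (permute_index n g) r)
       * cnj (\<psi> $ (inv_into {..<2 ^ n} (permute_index n g) c))" if g: "g permutes {..<n}" for g
    using permutation_mat_conjugate_index[OF bij_betw_permute_index[OF g] perm_op_carrier,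
        of "projector \<psi>"] r c \<psi> inv_permute_index_less[OF g]
    by (simp add: perm_op_index projector_def)
  then show ?thesis
    using r c by (simp add: av_pi_def)
qed

lemma mat_trace_av_pi_projector:
  assumes \<psi>: "dim_vec \<psi> = 2 ^ n"
  shows "mat_trace (av_pi n (projector \<psi>)) = of_real (\<Sum>r<2 ^ n. (cmod (\<psi> $ r))\<^sup>2)"
proof -
  let ?G = "{g. g permutes {..<n}}" and ?s = "\<lambda>g. inv_into {..<2 ^ n} (permute_index n g)"
  define h where "h a = \<psi> $ a * cnj (\<psi> $ a)" for a
  have "dim_row (av_pi n (projector \<psi>)) = 2 ^ n"
    by (simp add: av_pi_def)
  then have "mat_trace (av_pi n (projector \<psi>))
      = (\<Sum>r<2 ^ n. 1 / of_nat (fact n) * (\<Sum>g\<in>?G. h (?s g r)))"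
    using \<psi> by (simp add: mat_trace_def av_pi_projector_index h_def)
  also have "\<dots> = 1 / of_nat (fact n) * (\<Sum>g\<in>?G. \<Sum>r<2 ^ n. h (?s g r))"
    by (simp add: sum_distrib_left sum.swap[of _ "{..<2 ^ n}" ?G])
  also have "\<dots> = 1 / of_nat (fact n) * (\<Sum>g\<in>?G. \<Sum>a<2 ^ n. h a)"
    using bij_betw_inv_into[OF bij_betw_permute_index]
    by (intro arg_cong2[where f = "(*)"] sum.cong refl sum.reindex_bij_betw) auto
  also have "\<dots> = (\<Sum>a<2 ^ n. h a)"
    using card_permutations[of "{..<n}" n] by simp
  also have "\<dots> = of_real (\<Sum>r<2 ^ n. (cmod (\<psi> $ r))\<^sup>2)"
    by (simp only: h_def of_real_sum complex_norm_square)
  finally show ?thesis .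
qed

lemma overlap_permuted_uniform_vec_le:
  assumes g: "g permutes {..<n}" and A: "A \<subseteq> {..<2 ^ n}"
  shows "(cmod (\<Sum>r<2 ^ n. cnj (v $ r)
            * uniform_vec (2 ^ n) A $ (inv_into {..<2 ^ n} (permute_index n g) r)))\<^sup>2
    \<le> (\<Sum>a\<in>A. (cmod (v $ permute_index n g a))\<^sup>2)"
proof -
  let ?t = "permute_index n g" and ?\<alpha> = "1 / sqrt (real (card A))"
  have "(\<Sum>r<2 ^ n. cnj (v $ r) * uniform_vec (2 ^ n) A $ (inv_into {..<2 ^ n} ?t r))
      = (\<Sum>a<2 ^ n. cnj (v $ ?t a) * uniform_vec (2 ^ n) A $ a)"
    using sum.reindex_bij_betw[OF bij_betw_permute_index[OF g],
        of "\<lambda>r. cnj (v $ r) * uniform_vec (2 ^ n) A $ (inv_into {..<2 ^ n} ?t r)"]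
    by (simp add: inv_into_f_f[OF inj_on_permute_index[OF g]])
  also have "\<dots> = (\<Sum>a<2 ^ n. if a \<in> A then of_real ?\<alpha> * cnj (v $ ?t a) else 0)"
    by (intro sum.cong refl) (simp add: uniform_vec_def)
  also have "\<dots> = of_real ?\<alpha> * (\<Sum>a\<in>A. cnj (v $ ?t a))"
    using A by (simp add: sum_distrib_left Int_absorb1 flip: sum.inter_restrict)
  finally have "(cmod (\<Sum>r<2 ^ n. cnj (v $ r) * uniform_vec (2 ^ n) A $ (inv_into {..<2 ^ n} ?t r)))\<^sup>2
      = ?\<alpha>\<^sup>2 * (cmod (\<Sum>a\<in>A. cnj (v $ ?t a)))\<^sup>2"
    by (simp only: norm_mult norm_of_real power_mult_distrib) simp
  also have "\<dots> \<le> ?\<alpha>\<^sup>2 * (card A * (\<Sum>a\<in>A. (cmod (v $ ?t a))\<^sup>2))"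
    using norm_sum_squared_le[of "\<lambda>a. cnj (v $ ?t a)" A] by (intro mult_left_mono) auto
  also have "\<dots> \<le> 1 * (\<Sum>a\<in>A. (cmod (v $ ?t a))\<^sup>2)"
    unfolding mult.assoc[symmetric]
    by (intro mult_right_mono sum_nonneg) (auto simp: power_divide)
  finally show ?thesis
    by simp
qed

lemma sum_overlap_permuted_uniform_vec_le:
  assumes A: "A \<subseteq> weight_class n m"
  shows "real (n choose m) * (\<Sum>g | g permutes {..<n}. (cmod (\<Sum>r<2 ^ n. cnj (v $ r)
            * uniform_vec (2 ^ n) A $ (inv_into {..<2 ^ n} (permute_index n g) r)))\<^sup>2)
    \<le> fact n * card A * (\<Sum>r<2 ^ n. (cmod (v $ r))\<^sup>2)"
proof -
  let ?G = "{g. g permutes {..<n}}" and ?C = "real (n choose m)"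
  define f where "f y = (cmod (v $ y))\<^sup>2" for y
  have A_less: "A \<subseteq> {..<2 ^ n}"
    using A weight_class_subset by blast
  have "?C * (\<Sum>g\<in>?G. (cmod (\<Sum>r<2 ^ n. cnj (v $ r)
            * uniform_vec (2 ^ n) A $ (inv_into {..<2 ^ n} (permute_index n g) r)))\<^sup>2)
      \<le> ?C * (\<Sum>g\<in>?G. \<Sum>a\<in>A. f (permute_index n g a))"
    unfolding f_def
    by (intro mult_left_mono sum_mono overlap_permuted_uniform_vec_le A_less) auto
  also have "\<dots> = (\<Sum>a\<in>A. ?C * (\<Sum>g\<in>?G. f (permute_index n g a)))"
    by (simp add: sum_distrib_left sum.swap[of _ ?G A])
  also have "\<dots> = (\<Sum>a\<in>A. fact n * (\<Sum>y\<in>weight_class n m. f y))"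
    using A by (intro sum.cong refl sum_permutes_permute_index) auto
  also have "\<dots> \<le> (\<Sum>a\<in>A. fact n * (\<Sum>y<2 ^ n. f y))"
    by (intro sum_mono mult_left_mono sum_mono2 weight_class_subset) (auto simp: f_def)
  also have "\<dots> = fact n * card A * (\<Sum>r<2 ^ n. (cmod (v $ r))\<^sup>2)"
    by (simp add: f_def)
  finally show ?thesis .
qed

lemma eigenvalue_av_pi_uniform_vec:
  assumes A: "A \<subseteq> weight_class n m" "A \<noteq> {}"
    and x: "eigenvalue (av_pi n (projector (uniform_vec (2 ^ n) A))) x"
  shows "0 \<le> Re x \<and> Re x \<le> card A / (n choose m)"
proof -
  let ?\<psi> = "uniform_vec (2 ^ n) A" and ?G = "{g. g permutes {..<n}}"
  let ?\<sigma> = "av_pi n (projector ?\<psi>)"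
  define ov where "ov v g = (\<Sum>r<2 ^ n. cnj (v $ r) * ?\<psi> $ (inv_into {..<2 ^ n} (permute_index n g) r))"
    for v :: "complex vec" and g
  define N where "N v = (\<Sum>r<2 ^ n. (cmod (v $ r))\<^sup>2)" for v :: "complex vec"
  have \<sigma>: "?\<sigma> \<in> carrier_mat (2 ^ n) (2 ^ n)"
    by (simp add: av_pi_def)
  obtain v where v: "eigenvector ?\<sigma> v x"
    using x unfolding eigenvalue_def by blast
  have "x = of_real (1 / fact n * (\<Sum>g\<in>?G. (cmod (ov v g))\<^sup>2) / N v)"
    unfolding ov_def N_def
    by (rule eigenvalue_sum_of_projectors[OF \<sigma> _ v]) (simp add: av_pi_projector_index)
  then have Re_x: "Re x = 1 / fact n * (\<Sum>g\<in>?G. (cmod (ov v g))\<^sup>2) / N v"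
    by (simp only: Re_complex_of_real)
  have "N v > 0"
    unfolding N_def by (rule eigenvector_norm_pos[OF v \<sigma>])
  have "real (n choose m) > 0"
    using card_subset_weight_class[OF A] by linarith
  moreover have "real (n choose m) * (\<Sum>g\<in>?G. (cmod (ov v g))\<^sup>2) \<le> fact n * card A * N v"
    unfolding ov_def N_def by (rule sum_overlap_permuted_uniform_vec_le[OF A(1)])
  ultimately show ?thesis
    using \<open>N v > 0\<close> unfolding Re_x by (simp add: field_simps sum_nonneg)
qed

theorem vn_entropy_av_pi_uniform_vec_ge:
  assumes "A \<subseteq> weight_class n m" and "A \<noteq> {}"
  shows "ln (real (n choose m)) - ln (real (card A))
    \<le> vn_entropy (av_pi n (projector (uniform_vec (2 ^ n) A)))"
proof -
  have "A \<subseteq> {..<2 ^ n}"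
    using assms weight_class_subset by blast
  then have "mat_trace (av_pi n (projector (uniform_vec (2 ^ n) A))) = 1"
    using assms by (simp add: mat_trace_av_pi_projector sum_cmod_uniform_vec)
  then have "- ln (card A / (n choose m)) \<le> vn_entropy (av_pi n (projector (uniform_vec (2 ^ n) A)))"
    using assms eigenvalue_av_pi_uniform_vec by (intro vn_entropy_ge_neg_ln) (auto simp: av_pi_def)
  moreover have "card A > 0" and "real (n choose m) > 0"
    using card_subset_weight_class[OF assms] by linarith+
  ultimately show ?thesis
    by (simp add: ln_div)
qed

theorem mainTheorem3:
  fixes n m k l :: nat
  assumes "l \<le> k" and "k \<le> n" and "l \<le> m" and "int k - int l \<le> int n - int m"
  defines "M \<equiv> m - l" and "N \<equiv> n - m - (k - l)"
  shows "vn_entropy (av_pi n (projector (Xi_vec n m k l)))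
           \<ge> vn_entropy (rho_mix n m) - vn_entropy (rho_mix (N + M) M)
       \<and> vn_entropy (rho_mix n m) - vn_entropy (rho_mix (N + M) M)
           = ln (real (n choose m)) - ln (real ((n - k) choose (m - l)))"
proof -
  have "m \<le> n" and "k - l \<le> n - m"
    using assms(1-4) by linarith+
  then have NM: "N + M = n - k" and "M \<le> n - k"
    using assms(1-3) by (auto simp: N_def M_def)
  let ?W = "weight_class (n - k) (m - l)"
  let ?A = "(+) ((2 ^ l - 1) * 2 ^ (n - l)) ` ?W"
  have "Xi_vec n m k l = uniform_vec (2 ^ n) ?A"
    using assms(1-3) \<open>k - l \<le> n - m\<close> \<open>m \<le> n\<close> by (rule Xi_vec_eq_uniform_vec)
  moreover have "?A \<subseteq> weight_class n m"
    using weight_class_prepend_ones[of _ "n - k" "m - l" "n - l" l] assms(1-3) by auto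
  moreover have "card ?A = (n - k) choose (m - l)"
    by (simp add: card_image card_weight_class)
  moreover have "?A \<noteq> {}"
    using \<open>M \<le> n - k\<close> card_weight_class[of "n - k" "m - l"] by (auto simp: M_def)
  ultimately have "ln (real (n choose m)) - ln (real ((n - k) choose (m - l)))
      \<le> vn_entropy (av_pi n (projector (Xi_vec n m k l)))"
    using vn_entropy_av_pi_uniform_vec_ge by metis
  moreover have "vn_entropy (rho_mix n m) - vn_entropy (rho_mix (N + M) M)
      = ln (real (n choose m)) - ln (real ((n - k) choose (m - l)))"
    unfolding NM using \<open>m \<le> n\<close> \<open>M \<le> n - k\<close> by (simp add: vn_entropy_rho_mix M_def)
  ultimately show ?thesis
    by simp
qed

end
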